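(* Let $\varphi$ be an LTL formula in PNF and let $\mathcal{A}(\varphi)=(Q,\Sigma,\delta,\alpha_0,F)$ be the alternating $\omega$-automaton with $Q=\partial^+(\varphi)$, $\delta(\psi,x)=\partial_x(\psi)$ for all $\psi\in Q$ and $x\in\Sigma$, initial states $\alpha_0=\mathrm{simp}(\varphi)$, and $F=\{\mathbf{tt}\}\cup\{\varphi_1\,\mathcal{R}\,\psi_1 \mid \varphi_1\,\mathcal{R}\,\psi_1\in Q\}$. Then $\mathcal{L}(\varphi)=\mathcal{L}(\mathcal{A}(\varphi))$ under the Büchi acceptance condition.
   Context: LTL formulae in PNF: $\varphi,\psi ::= p \mid \neg p \mid \mathbf{tt} \mid \mathbf{ff} \mid \varphi\wedge\psi \mid \varphi\vee\psi \mid \bigcirc\varphi \mid \varphi\,\mathcal{U}\,\psi \mid \varphi\,\mathcal{R}\,\psi$ with the standard semantics over $\sigma\in\Sigma^\omega$ and an interpretation $I:\Sigma\to\mathcal{P}(AP)$; $\mathcal{L}(\varphi)=\{\sigma\mid\sigma\models\varphi\}$. Temporal formula: does not start with $\wedge$ or $\vee$. Monomials $\mu,\nu$: $\mathbf{ff}$ or consistent sets of literals; $x\models\mu$ means every literal of $\mu$ holds under $I(x)$; $\mu\sqcap\nu$ is $\mathbf{ff}$ if either is $\mathbf{ff}$ or $\mu\cup\nu$ is contradictory, else $\mu\cup\nu$. $\varphi\,\dot\wedge\,\psi$ denotes formal conjunction, normalized modulo associativity, commutativity, idempotence ($\mathbf{tt}$ is the empty formal conjunction). $\mathrm{simp}(\varphi\wedge\psi)=\{\varphi'\,\dot\wedge\,\psi'\mid\varphi'\in\mathrm{simp}(\varphi),\psi'\in\mathrm{simp}(\psi)\}$,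 $\mathrm{simp}(\varphi\vee\psi)=\mathrm{simp}(\varphi)\cup\mathrm{simp}(\psi)$, $\mathrm{simp}(\varphi)=\{\varphi\}$ for temporal $\varphi$. Linear factors $\mathrm{LF}$: $\mathrm{LF}(\ell)=\{\langle\{\ell\},\mathbf{tt}\rangle\}$, $\mathrm{LF}(\mathbf{tt})=\{\langle\mathbf{tt},\mathbf{tt}\rangle\}$, $\mathrm{LF}(\mathbf{ff})=\{\}$, $\mathrm{LF}(\varphi\vee\psi)=\mathrm{LF}(\varphi)\cup\mathrm{LF}(\psi)$, $\mathrm{LF}(\varphi\wedge\psi)=\{\langle\mu\sqcap\nu,\varphi'\,\dot\wedge\,\psi'\rangle\mid\langle\mu,\varphi'\rangle\in\mathrm{LF}(\varphi),\langle\nu,\psi'\rangle\in\mathrm{LF}(\psi),\mu\sqcap\nu\neq\mathbf{ff}\}$, $\mathrm{LF}(\bigcirc\varphi)=\{\langle\mathbf{tt},\varphi'\rangle\mid\varphi'\in\mathrm{simp}(\varphi)\}$, $\mathrm{LF}(\varphi\,\mathcal{U}\,\psi)=\mathrm{LF}(\psi)\cup\{\langle\mu,\varphi'\,\dot\wedge\,(\varphi\,\mathcal{U}\,\psi)\rangle\mid\langle\mu,\varphi'\rangle\in\mathrm{LF}(\varphi)\}$, $\mathrm{LF}(\varphi\,\mathcal{R}\,\psi)=\{\langle\mu\sqcap\nu,\varphi'\,\dot\wedge\,\psi'\rangle\mid\langle\mu,\varphi'\rangle\in\mathrm{LF}(\varphi),\langle\nu,\psi'\rangle\in\mathrm{LF}(\psi),\mu\sqcap\nu\neq\mathbf{ff}\}\cup\{\langle\nu,\psi'\,\dot\wedge\,(\varphi\,\mathcal{R}\,\psi)\rangle\mid\langle\nu,\psi'\rangle\in\mathrm{LF}(\psi)\}$.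 Partial derivatives: $\partial_x(\varphi)=\{\varphi'\mid\langle\mu,\varphi'\rangle\in\mathrm{LF}(\varphi),x\models\mu\}$ for temporal $\varphi$; $\partial_x(\mathbf{tt})=\{\mathbf{tt}\}$; $\partial_x(\varphi\,\dot\wedge\,\psi)=\{\varphi'\,\dot\wedge\,\psi'\mid\varphi'\in\partial_x(\varphi),\psi'\in\partial_x(\psi)\}$. Iterated partial derivatives (subformula set): $\partial^+(\ell)=\{\ell\}$, $\partial^+(\mathbf{tt})=\{\mathbf{tt}\}$, $\partial^+(\mathbf{ff})=\{\mathbf{ff}\}$, $\partial^+(\varphi\vee\psi)=\partial^+(\varphi\wedge\psi)=\partial^+(\varphi)\cup\partial^+(\psi)$, $\partial^+(\bigcirc\varphi)=\{\bigcirc\varphi\}\cup\partial^+(\varphi)$, $\partial^+(\varphi\,\mathcal{U}\,\psi)=\{\varphi\,\mathcal{U}\,\psi\}\cup\partial^+(\varphi)\cup\partial^+(\psi)$, $\partial^+(\varphi\,\mathcal{R}\,\psi)=\{\varphi\,\mathcal{R}\,\psi\}\cup\partial^+(\varphi)\cup\partial^+(\psi)$. An alternating $\omega$-automaton $(Q,\Sigma,\delta,\alpha_0,F)$ has finite state set $Q$, initial condition $\alpha_0$ (a set of sets of states, read as a disjunction of conjunctions), transition function $\delta$ returning a set of conjunctions of states (read as a disjunction), and $F\subseteq Q$. A run on $\sigma$ is a layered digraph with nodes in $Q\times\mathbb{N}$ whose level-0 state set is in $\alpha_0$, every node at level $i+1$ has a predecessor at level $i$, and the successor set of each $(q,i)$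 is in $\delta(q,\sigma_i)$; a run is accepting if every infinite path visits $F$ infinitely often, and $\mathcal{L}(\mathcal{A})$ is the set of words with an accepting run. *)

theory Defs
  imports Main
begin

datatype 'p ltl =
    Prop 'p
  | NProp 'p
  | TT
  | FF
  | And "'p ltl" "'p ltl"
  | Or "'p ltl" "'p ltl"
  | Next "'p ltl"
  | Until "'p ltl" "'p ltl"
  | Release "'p ltl" "'p ltl"

primrec sem :: "('x \<Rightarrow> 'p set) \<Rightarrow> (nat \<Rightarrow> 'x) \<Rightarrow> nat \<Rightarrow> 'p ltl \<Rightarrow> bool" where
  "sem I w i (Prop p) = (p \<in> I (w i))"
| "sem I w i (NProp p) = (p \<notin> I (w i))"
| "sem I w i TT = True"
| "sem I w i FF = False"
| "sem I w i (And a b) = (sem I w i a \<and> sem I w i b)"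
| "sem I w i (Or a b) = (sem I w i a \<or> sem I w i b)"
| "sem I w i (Next a) = sem I w (Suc i) a"
| "sem I w i (Until a b) = (\<exists>j\<ge>i. sem I w j b \<and> (\<forall>k. i \<le> k \<and> k < j \<longrightarrow> sem I w k a))"
| "sem I w i (Release a b) = (\<forall>j\<ge>i. sem I w j b \<or> (\<exists>k. i \<le> k \<and> k < j \<and> sem I w k a))"

definition ltl_lang :: "('x \<Rightarrow> 'p set) \<Rightarrow> 'p ltl \<Rightarrow> (nat \<Rightarrow> 'x) set" where
  "ltl_lang I \<phi> = {w. sem I w 0 \<phi>}"

datatype 'p lit = Pos 'p | Neg 'p

text \<open>A monomial is ff (None) or a consistent set of literals (Some S).
  tt is the empty monomial Some {}.\<close>
type_synonym 'p monomial = "'p lit set option"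

definition consistent :: "'p lit set \<Rightarrow> bool" where
  "consistent S \<longleftrightarrow> \<not> (\<exists>p. Pos p \<in> S \<and> Neg p \<in> S)"

definition meet :: "'p monomial \<Rightarrow> 'p monomial \<Rightarrow> 'p monomial" where
  "meet \<mu> \<nu> = (case (\<mu>, \<nu>) of
      (Some a, Some b) \<Rightarrow> (if consistent (a \<union> b) then Some (a \<union> b) else None)
    | _ \<Rightarrow> None)"

primrec lit_holds :: "'p set \<Rightarrow> 'p lit \<Rightarrow> bool" where
  "lit_holds P (Pos p) = (p \<in> P)"
| "lit_holds P (Neg p) = (p \<notin> P)"

definition models :: "('x \<Rightarrow> 'p set) \<Rightarrow> 'x \<Rightarrow> 'p monomial \<Rightarrow> bool" where
  "models I x \<mu> = (case \<mu> of None \<Rightarrow> False | Some S \<Rightarrow> (\<forall>l\<in>S. lit_holds (I x) l))"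

text \<open>Formal conjunctions (normalized modulo ACI) are sets of temporal formulas;
  tt is the empty formal conjunction, so the conjunct tt is dropped.\<close>
type_synonym 'p fconj = "'p ltl set"

definition fc :: "'p ltl \<Rightarrow> 'p fconj" where
  "fc \<phi> = (if \<phi> = TT then {} else {\<phi>})"

primrec simp :: "'p ltl \<Rightarrow> 'p fconj set" where
  "simp (Prop p) = {fc (Prop p)}"
| "simp (NProp p) = {fc (NProp p)}"
| "simp TT = {fc TT}"
| "simp FF = {fc FF}"
| "simp (And a b) = {A \<union> B | A B. A \<in> simp a \<and> B \<in> simp b}"
| "simp (Or a b) = simp a \<union> simp b"
| "simp (Next a) = {fc (Next a)}"
| "simp (Until a b) = {fc (Until a b)}"
| "simp (Release a b) = {fc (Release a b)}"

primrec LF :: "'p ltl \<Rightarrow> ('p monomial \<times> 'p fconj) set" where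
  "LF (Prop p) = {(Some {Pos p}, {})}"
| "LF (NProp p) = {(Some {Neg p}, {})}"
| "LF TT = {(Some {}, {})}"
| "LF FF = {}"
| "LF (Or a b) = LF a \<union> LF b"
| "LF (And a b) = {(meet \<mu> \<nu>, A \<union> B) | \<mu> A \<nu> B.
      (\<mu>, A) \<in> LF a \<and> (\<nu>, B) \<in> LF b \<and> meet \<mu> \<nu> \<noteq> None}"
| "LF (Next a) = {(Some {}, A) | A. A \<in> simp a}"
| "LF (Until a b) = LF b \<union> {(\<mu>, A \<union> {Until a b}) | \<mu> A. (\<mu>, A) \<in> LF a}"
| "LF (Release a b) = {(meet \<mu> \<nu>, A \<union> B) | \<mu> A \<nu> B.
      (\<mu>, A) \<in> LF a \<and> (\<nu>, B) \<in> LF b \<and> meet \<mu> \<nu> \<noteq> None}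
    \<union> {(\<nu>, B \<union> {Release a b}) | \<nu> B. (\<nu>, B) \<in> LF b}"

definition pderiv :: "('x \<Rightarrow> 'p set) \<Rightarrow> 'x \<Rightarrow> 'p ltl \<Rightarrow> 'p fconj set" where
  "pderiv I x \<psi> = {A. \<exists>\<mu>. (\<mu>, A) \<in> LF \<psi> \<and> models I x \<mu>}"

text \<open>Iterated partial derivatives (subformula set).\<close>
primrec pderiv_plus :: "'p ltl \<Rightarrow> 'p ltl set" where
  "pderiv_plus (Prop p) = {Prop p}"
| "pderiv_plus (NProp p) = {NProp p}"
| "pderiv_plus TT = {TT}"
| "pderiv_plus FF = {FF}"
| "pderiv_plus (And a b) = pderiv_plus a \<union> pderiv_plus b"
| "pderiv_plus (Or a b) = pderiv_plus a \<union> pderiv_plus b"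
| "pderiv_plus (Next a) = {Next a} \<union> pderiv_plus a"
| "pderiv_plus (Until a b) = {Until a b} \<union> pderiv_plus a \<union> pderiv_plus b"
| "pderiv_plus (Release a b) = {Release a b} \<union> pderiv_plus a \<union> pderiv_plus b"

record ('q, 'x) aaut =
  states :: "'q set"
  trans :: "'q \<Rightarrow> 'x \<Rightarrow> 'q set set"
  init :: "'q set set"
  acc :: "'q set"

text \<open>A run on w: level sets V i (the nodes (q,i) with q \<in> V i) and successor sets
  E i q (the successors of node (q,i), all at level i+1).\<close>
definition is_run :: "('q, 'x) aaut \<Rightarrow> (nat \<Rightarrow> 'x) \<Rightarrow> (nat \<Rightarrow> 'q set) \<Rightarrow> (nat \<Rightarrow> 'q \<Rightarrow> 'q set) \<Rightarrow> bool" where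
  "is_run A w V E \<longleftrightarrow>
     V 0 \<in> init A \<and>
     (\<forall>i. V i \<subseteq> states A) \<and>
     (\<forall>i. \<forall>q\<in>V i. E i q \<subseteq> V (Suc i) \<and> E i q \<in> trans A q (w i)) \<and>
     (\<forall>i. \<forall>q'\<in>V (Suc i). \<exists>q\<in>V i. q' \<in> E i q)"

definition is_path :: "(nat \<Rightarrow> 'q set) \<Rightarrow> (nat \<Rightarrow> 'q \<Rightarrow> 'q set) \<Rightarrow> (nat \<Rightarrow> 'q) \<Rightarrow> bool" where
  "is_path V E p \<longleftrightarrow> p 0 \<in> V 0 \<and> (\<forall>i. p (Suc i) \<in> E i (p i))"

definition buechi_accepting :: "('q, 'x) aaut \<Rightarrow> (nat \<Rightarrow> 'q set) \<Rightarrow> (nat \<Rightarrow> 'q \<Rightarrow> 'q set) \<Rightarrow> bool" where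
  "buechi_accepting A V E \<longleftrightarrow> (\<forall>p. is_path V E p \<longrightarrow> (\<exists>\<^sub>\<infinity>i. p i \<in> acc A))"

definition aut_lang :: "('q, 'x) aaut \<Rightarrow> (nat \<Rightarrow> 'x) set" where
  "aut_lang A = {w. \<exists>V E. is_run A w V E \<and> buechi_accepting A V E}"

definition is_release :: "'p ltl \<Rightarrow> bool" where
  "is_release \<psi> \<longleftrightarrow> (\<exists>a b. \<psi> = Release a b)"

definition ltl_aut :: "('x \<Rightarrow> 'p set) \<Rightarrow> 'p ltl \<Rightarrow> ('p ltl, 'x) aaut" where
  "ltl_aut I \<phi> = \<lparr> states = pderiv_plus \<phi>,
                    trans = (\<lambda>\<psi> x. pderiv I x \<psi>),
                    init = simp \<phi>,
                    acc = {TT} \<union> {\<psi> \<in> pderiv_plus \<phi>. is_release \<psi>} \<rparr>"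

end

theory Submission
  imports Defs "HOL-Library.Infinite_Set"
begin

(* A formula c holds at position i iff some linear factor (mu, A) of c has mu true of the
   letter at i and all of A true from i + 1 on, and every derivative of c is smaller than c
   except that an Until or Release formula may reproduce itself.
   Soundness: by induction on the size of a state, each state of an accepting run holds where
   it occurs. The only delicate case is an Until that is never fulfilled: it then reproduces
   itself forever, giving a path that stays in a non-accepting state from some level on.
   Completeness: a model induces a run that always follows a true linear factor and fulfils an
   Until as soon as its goal holds. State sizes never increase along a path, so every path
   eventually stays in a self-reproducing state; eagerness rules out an Until there, so it is
   an accepting Release. *)

lemma models_meet: "models I x (meet \<mu> \<nu>) \<longleftrightarrow> models I x \<mu> \<and> models I x \<nu>"
  by (cases \<mu>; cases \<nu>) (auto simp: models_def meet_def consistent_def, (meson lit_holds.simps)+)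

lemma sem_Until_unfold:
  "sem I w i (Until a b) \<longleftrightarrow> sem I w i b \<or> (sem I w i a \<and> sem I w (Suc i) (Until a b))"
proof
  assume "sem I w i (Until a b)"
  then obtain j where j: "j \<ge> i" "sem I w j b" "\<forall>k. i \<le> k \<and> k < j \<longrightarrow> sem I w k a"
    by auto
  show "sem I w i b \<or> (sem I w i a \<and> sem I w (Suc i) (Until a b))"
  proof (cases "j = i")
    case False
    with j have "sem I w i a" "sem I w (Suc i) (Until a b)"
      by (auto intro!: exI[of _ j] simp: Suc_le_eq)
    then show ?thesis by simp
  qed (use j in simp)
next
  assume "sem I w i b \<or> (sem I w i a \<and> sem I w (Suc i) (Until a b))"
  then show "sem I w i (Until a b)"
    by (auto simp: Suc_le_eq) (metis le_eq_less_or_eq)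
qed

lemma sem_Release_unfold:
  "sem I w i (Release a b) \<longleftrightarrow> sem I w i b \<and> (sem I w i a \<or> sem I w (Suc i) (Release a b))"
proof
  assume "sem I w i (Release a b)"
  then show "sem I w i b \<and> (sem I w i a \<or> sem I w (Suc i) (Release a b))"
    by (auto simp: Suc_le_eq) (metis le_eq_less_or_eq)
next
  assume "sem I w i b \<and> (sem I w i a \<or> sem I w (Suc i) (Release a b))"
  then show "sem I w i (Release a b)"
    by (auto simp: Suc_le_eq) (metis le_eq_less_or_eq)+
qed

lemma not_models_None [simp]: "\<not> models I x None"
  by (simp add: models_def)

lemma models_meet_ne: "models I x \<mu> \<Longrightarrow> models I x \<nu> \<Longrightarrow> meet \<mu> \<nu> \<noteq> None"
  by (metis models_meet not_models_None)

lemma sem_iff_simp: "sem I w i c \<longleftrightarrow> (\<exists>A\<in>simp c. \<forall>\<chi>\<in>A. sem I w i \<chi>)"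
proof (induction c)
  case (And a b)
  show ?case
  proof
    assume "sem I w i (And a b)"
    with And.IH obtain A B where "A \<in> simp a" "B \<in> simp b" "\<forall>\<chi>\<in>A \<union> B. sem I w i \<chi>"
      by auto
    then show "\<exists>C\<in>simp (And a b). \<forall>\<chi>\<in>C. sem I w i \<chi>" by auto
  qed (use And.IH in auto)
qed (auto simp: fc_def)

lemma LF_sound:
  "(\<mu>, A) \<in> LF c \<Longrightarrow> models I (w i) \<mu> \<Longrightarrow> \<forall>\<chi>\<in>A. sem I w (Suc i) \<chi> \<Longrightarrow> sem I w i c"
proof (induction c arbitrary: \<mu> A)
  case (And a b)
  from And.prems(1) obtain \<mu>1 A1 \<nu> B
    where "(\<mu>1, A1) \<in> LF a" "(\<nu>, B) \<in> LF b" "\<mu> = meet \<mu>1 \<nu>" "A = A1 \<union> B"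
    by auto
  with And.IH And.prems(2,3) show ?case by (simp add: models_meet)
next
  case (Next a)
  then have "A \<in> simp a" by simp
  with Next.prems(3) have "sem I w (Suc i) a" by (meson sem_iff_simp)
  then show ?case by simp
next
  case (Until a b)
  from Until.prems(1) consider "(\<mu>, A) \<in> LF b"
    | A' where "(\<mu>, A') \<in> LF a" "A = A' \<union> {Until a b}"
    by auto
  then show ?case
  proof cases
    case 1
    with Until.IH(2) Until.prems(2,3) have "sem I w i b" by blast
    then show ?thesis using sem_Until_unfold by blast
  next
    case 2
    with Until.IH(1) Until.prems(2,3) have "sem I w i a" "sem I w (Suc i) (Until a b)" by blast+
    then show ?thesis using sem_Until_unfold by blast
  qed
next
  case (Release a b)
  from Release.prems(1) consider
      \<mu>1 A1 \<nu> B where "(\<mu>1, A1) \<in> LF a" "(\<nu>, B) \<in> LF b" "\<mu> = meet \<mu>1 \<nu>" "A = A1 \<union> B"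
    | B where "(\<mu>, B) \<in> LF b" "A = B \<union> {Release a b}"
    by auto
  then show ?case
  proof cases
    case 1
    with Release.IH Release.prems(2,3) have "sem I w i a" "sem I w i b"
      by (simp_all add: models_meet)
    then show ?thesis using sem_Release_unfold by blast
  next
    case 2
    with Release.IH(2) Release.prems(2,3) have "sem I w i b" "sem I w (Suc i) (Release a b)"
      by simp_all
    then show ?thesis using sem_Release_unfold by blast
  qed
qed (auto simp: models_def)

lemma LF_complete:
  "sem I w i c \<Longrightarrow> \<exists>\<mu> A. (\<mu>, A) \<in> LF c \<and> models I (w i) \<mu> \<and> (\<forall>\<chi>\<in>A. sem I w (Suc i) \<chi>)"
proof (induction c)
  case (And a b)
  then have "sem I w i a" "sem I w i b" by simp_all
  with And.IH obtain \<mu> A \<nu> B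
    where A: "(\<mu>, A) \<in> LF a" "models I (w i) \<mu>" "\<forall>\<chi>\<in>A. sem I w (Suc i) \<chi>"
      and B: "(\<nu>, B) \<in> LF b" "models I (w i) \<nu>" "\<forall>\<chi>\<in>B. sem I w (Suc i) \<chi>"
    by blast
  have "(meet \<mu> \<nu>, A \<union> B) \<in> LF (And a b)"
    using A(1) B(1) models_meet_ne[OF A(2) B(2)] unfolding LF.simps by fast
  moreover have "models I (w i) (meet \<mu> \<nu>)" using A B by (simp add: models_meet)
  ultimately show ?case using A B by blast
next
  case (Next a)
  then obtain A where "A \<in> simp a" "\<forall>\<chi>\<in>A. sem I w (Suc i) \<chi>"
    by (meson sem.simps(7) sem_iff_simp)
  moreover have "models I (w i) (Some {})" by (simp add: models_def)
  ultimately show ?case by auto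
next
  case (Until a b)
  show ?case
  proof (cases "sem I w i b")
    case True
    with Until.IH(2) show ?thesis by auto
  next
    case False
    with Until.prems have "sem I w i a" "sem I w (Suc i) (Until a b)"
      using sem_Until_unfold by blast+
    with Until.IH(1) obtain \<mu> A
      where A: "(\<mu>, A) \<in> LF a" "models I (w i) \<mu>" "\<forall>\<chi>\<in>A \<union> {Until a b}. sem I w (Suc i) \<chi>"
      by blast
    moreover have "(\<mu>, A \<union> {Until a b}) \<in> LF (Until a b)" using A(1) by auto
    ultimately show ?thesis by blast
  qed
next
  case (Release a b)
  from Release.prems have "sem I w i b" using sem_Release_unfold by blast
  with Release.IH(2) obtain \<nu> B
    where B: "(\<nu>, B) \<in> LF b" "models I (w i) \<nu>" "\<forall>\<chi>\<in>B. sem I w (Suc i) \<chi>"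
    by blast
  show ?case
  proof (cases "sem I w i a")
    case True
    with Release.IH(1) obtain \<mu> A
      where A: "(\<mu>, A) \<in> LF a" "models I (w i) \<mu>" "\<forall>\<chi>\<in>A. sem I w (Suc i) \<chi>"
      by blast
    have "(meet \<mu> \<nu>, A \<union> B) \<in> LF (Release a b)"
      using A(1) B(1) models_meet_ne[OF A(2) B(2)] unfolding LF.simps by fast
    moreover have "models I (w i) (meet \<mu> \<nu>)" using A(2) B(2) by (simp add: models_meet)
    ultimately show ?thesis using A(3) B(3) by blast
  next
    case False
    with Release.prems have "sem I w (Suc i) (Release a b)" using sem_Release_unfold by blast
    moreover have "(\<nu>, B \<union> {Release a b}) \<in> LF (Release a b)" using B(1) by auto
    ultimately show ?thesis using B(2,3) by blast
  qed
qed (auto simp: models_def)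

lemma simp_subset_pderiv_plus: "A \<in> simp c \<Longrightarrow> A \<subseteq> pderiv_plus c"
  by (induction c arbitrary: A) (auto simp: fc_def)

lemma LF_subset_pderiv_plus: "(\<mu>, A) \<in> LF c \<Longrightarrow> A \<subseteq> pderiv_plus c"
  by (induction c arbitrary: \<mu> A) (fastforce dest: simp_subset_pderiv_plus)+

lemma pderiv_plus_trans: "\<psi> \<in> pderiv_plus c \<Longrightarrow> pderiv_plus \<psi> \<subseteq> pderiv_plus c"
proof (induction c)
  case (Next a) then show ?case by (cases "\<psi> = Next a") auto
next
  case (Until a b) then show ?case by (cases "\<psi> = Until a b") auto
next
  case (Release a b) then show ?case by (cases "\<psi> = Release a b") auto
qed auto

lemma size_simp_le: "A \<in> simp c \<Longrightarrow> \<chi> \<in> A \<Longrightarrow> size \<chi> \<le> size c"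
  by (induction c arbitrary: A) (fastforce simp: fc_def split: if_splits)+

lemma size_LF:
  "(\<mu>, A) \<in> LF c \<Longrightarrow> \<chi> \<in> A \<Longrightarrow>
     size \<chi> < size c \<or> \<chi> = c \<and> (\<exists>a b. c = Until a b \<or> c = Release a b)"
  by (induction c arbitrary: \<mu> A) (fastforce dest: size_simp_le)+

lemma size_LF_le: "(\<mu>, A) \<in> LF c \<Longrightarrow> \<chi> \<in> A \<Longrightarrow> size \<chi> \<le> size c"
  using size_LF by fastforce

lemma LF_Until_step:
  assumes "(\<mu>, A) \<in> LF (Until a b)" "models I (w i) \<mu>"
    and "\<forall>\<chi>\<in>A - {Until a b}. sem I w (Suc i) \<chi>"
  shows "sem I w i b \<or> sem I w i a \<and> Until a b \<in> A"
proof -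
  from assms(1) consider "(\<mu>, A) \<in> LF b" | A' where "(\<mu>, A') \<in> LF a" "A = A' \<union> {Until a b}"
    by auto
  then show ?thesis
  proof cases
    case 1
    then have "Until a b \<notin> A" using size_LF_le by fastforce
    with assms(3) have "\<forall>\<chi>\<in>A. sem I w (Suc i) \<chi>" by blast
    with 1 assms(2) show ?thesis using LF_sound by blast
  next
    case 2
    then have "Until a b \<notin> A'" using size_LF_le by fastforce
    with 2 assms(3) have "\<forall>\<chi>\<in>A'. sem I w (Suc i) \<chi>" by blast
    with 2 assms(2) show ?thesis using LF_sound by blast
  qed
qed

lemma LF_Release_step:
  assumes "(\<mu>, A) \<in> LF (Release a b)" "models I (w i) \<mu>"
    and "\<forall>\<chi>\<in>A - {Release a b}. sem I w (Suc i) \<chi>"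
  shows "sem I w i b \<and> (sem I w i a \<or> Release a b \<in> A)"
proof -
  from assms(1) consider
      \<mu>1 A1 \<nu> B where "(\<mu>1, A1) \<in> LF a" "(\<nu>, B) \<in> LF b" "\<mu> = meet \<mu>1 \<nu>" "A = A1 \<union> B"
    | B where "(\<mu>, B) \<in> LF b" "A = B \<union> {Release a b}"
    by auto
  then show ?thesis
  proof cases
    case 1
    then have "Release a b \<notin> A1" "Release a b \<notin> B" using size_LF_le by fastforce+
    with 1 assms(3) have "\<forall>\<chi>\<in>A1. sem I w (Suc i) \<chi>" "\<forall>\<chi>\<in>B. sem I w (Suc i) \<chi>" by blast+
    with 1 assms(2) show ?thesis using LF_sound by (metis models_meet)
  next
    case 2
    then have "Release a b \<notin> B" using size_LF_le by fastforce
    with 2 assms(3) have "\<forall>\<chi>\<in>B. sem I w (Suc i) \<chi>" by blast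
    with 2 assms(2) show ?thesis using LF_sound by blast
  qed
qed

lemma sem_Release_if_persistent:
  assumes persist: "\<And>m. i \<le> m \<Longrightarrow> P m \<Longrightarrow> sem I w m b \<and> (sem I w m a \<or> P (Suc m))"
    and "P i"
  shows "sem I w i (Release a b)"
proof -
  have "(\<exists>k. i \<le> k \<and> k < j \<and> sem I w k a) \<or> P j" if "i \<le> j" for j
    using that
  proof (induction j rule: dec_induct)
    case base
    show ?case using \<open>P i\<close> by blast
  next
    case (step j)
    then show ?case using persist[of j] less_SucI by blast
  qed
  then show ?thesis using persist by fastforce
qed

lemma run_path_prefix:
  assumes "is_run A w V E" "q \<in> V n"
  shows "\<exists>p. p 0 \<in> V 0 \<and> p n = q \<and> (\<forall>k<n. p (Suc k) \<in> E k (p k))"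
  using assms(2)
proof (induction n arbitrary: q)
  case 0
  then show ?case by (intro exI[of _ "\<lambda>_. q"]) simp
next
  case (Suc n)
  from assms(1) Suc.prems obtain q' where "q' \<in> V n" and q: "q \<in> E n q'"
    unfolding is_run_def by blast
  with Suc.IH obtain p where "p 0 \<in> V 0" "p n = q'" "\<forall>k<n. p (Suc k) \<in> E k (p k)"
    by blast
  with q show ?case by (intro exI[of _ "p(Suc n := q)"]) (auto simp: less_Suc_eq)
qed

lemma is_path_in_run:
  assumes "is_run A w V E" "is_path V E p"
  shows "p i \<in> V i"
  using assms by (induction i) (unfold is_run_def is_path_def, blast+)

lemma buechi_accepting_self_loop:
  assumes run: "is_run A w V E" and accepting: "buechi_accepting A V E"
    and "q \<in> V i" and loop: "\<And>m. i \<le> m \<Longrightarrow> q \<in> E m q"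
  shows "q \<in> acc A"
proof -
  obtain p where p: "p 0 \<in> V 0" "p i = q" "\<forall>k<i. p (Suc k) \<in> E k (p k)"
    using run_path_prefix[OF run \<open>q \<in> V i\<close>] by blast
  define p' where "p' k = (if k \<le> i then p k else q)" for k
  have "is_path V E p'"
    unfolding is_path_def
  proof (intro conjI allI)
    show "p' 0 \<in> V 0" using p by (simp add: p'_def)
    show "p' (Suc k) \<in> E k (p' k)" for k
      using p loop by (cases k i rule: linorder_cases) (auto simp: p'_def)
  qed
  with accepting have "\<exists>\<^sub>\<infinity>k. p' k \<in> acc A" by (simp add: buechi_accepting_def)
  then obtain k where "k > i" "p' k \<in> acc A" by (auto simp: INFM_nat)
  then show ?thesis by (simp add: p'_def)
qed

lemma accepting_run_sem_Until:
  assumes run: "is_run A w V E" and accepting: "buechi_accepting A V E"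
    and "q \<notin> acc A" and "q \<in> V i"
    and progress: "\<And>m. q \<in> V m \<Longrightarrow> sem I w m b \<or> sem I w m a \<and> q \<in> E m q"
  shows "sem I w i (Until a b)"
proof (rule ccontr)
  assume "\<not> sem I w i (Until a b)"
  have pending: "q \<in> V m \<and> \<not> sem I w m (Until a b)" if "i \<le> m" for m
    using that
  proof (induction m rule: dec_induct)
    case base
    show ?case using \<open>q \<in> V i\<close> \<open>\<not> sem I w i (Until a b)\<close> by blast
  next
    case (step m)
    with progress have "sem I w m a" "q \<in> E m q" using sem_Until_unfold by blast+
    with step run show ?case using sem_Until_unfold unfolding is_run_def by blast
  qed
  then have "q \<in> E m q" if "i \<le> m" for m
    using that progress sem_Until_unfold by blast
  with run accepting \<open>q \<in> V i\<close> have "q \<in> acc A" by (rule buechi_accepting_self_loop)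
  with \<open>q \<notin> acc A\<close> show False ..
qed

lemma run_ltl_aut_step:
  assumes "is_run (ltl_aut I \<phi>) w V E" "q \<in> V m"
  shows "E m q \<subseteq> V (Suc m) \<and> (\<exists>\<mu>. (\<mu>, E m q) \<in> LF q \<and> models I (w m) \<mu>)"
  using assms by (simp add: is_run_def ltl_aut_def pderiv_def)

lemma accepting_run_sound:
  assumes run: "is_run (ltl_aut I \<phi>) w V E"
    and accepting: "buechi_accepting (ltl_aut I \<phi>) V E"
  shows "\<psi> \<in> V i \<Longrightarrow> sem I w i \<psi>"
proof (induction \<psi> arbitrary: i rule: measure_induct_rule[where f = size])
  case (less \<psi> i)
  have step: "\<exists>\<mu>. (\<mu>, E m \<psi>) \<in> LF \<psi> \<and> models I (w m) \<mu> \<and> E m \<psi> \<subseteq> V (Suc m)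
      \<and> (\<forall>\<chi>\<in>E m \<psi> - {\<psi>}. sem I w (Suc m) \<chi>)" if "\<psi> \<in> V m" for m
  proof -
    from run_ltl_aut_step[OF run that] obtain \<mu>
      where \<mu>: "(\<mu>, E m \<psi>) \<in> LF \<psi>" "models I (w m) \<mu>" "E m \<psi> \<subseteq> V (Suc m)"
      by blast
    moreover have "sem I w (Suc m) \<chi>" if "\<chi> \<in> E m \<psi> - {\<psi>}" for \<chi>
      using size_LF[OF \<mu>(1)] that \<mu>(3) less.IH by blast
    ultimately show ?thesis by blast
  qed
  consider (Until) a b where "\<psi> = Until a b" | (Release) a b where "\<psi> = Release a b"
    | (other) "\<forall>a b. \<psi> \<noteq> Until a b \<and> \<psi> \<noteq> Release a b"
    by blast
  then show ?case
  proof cases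
    case other
    from step[OF less.prems] obtain \<mu> where \<mu>: "(\<mu>, E i \<psi>) \<in> LF \<psi>" "models I (w i) \<mu>"
      and hold: "\<forall>\<chi>\<in>E i \<psi> - {\<psi>}. sem I w (Suc i) \<chi>"
      by blast
    from other have "\<psi> \<notin> E i \<psi>" using size_LF[OF \<mu>(1)] by blast
    with hold have "\<forall>\<chi>\<in>E i \<psi>. sem I w (Suc i) \<chi>" by blast
    with \<mu> show ?thesis by (rule LF_sound)
  next
    case (Until a b)
    have "sem I w m b \<or> sem I w m a \<and> \<psi> \<in> E m \<psi>" if "\<psi> \<in> V m" for m
      using step[OF that] Until LF_Until_step by blast
    moreover have "\<psi> \<notin> acc (ltl_aut I \<phi>)" using Until by (simp add: ltl_aut_def is_release_def)
    ultimately show ?thesis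
      using accepting_run_sem_Until[OF run accepting _ less.prems] Until by blast
  next
    case (Release a b)
    have "sem I w m b \<and> (sem I w m a \<or> \<psi> \<in> V (Suc m))" if "\<psi> \<in> V m" for m
      using step[OF that] Release LF_Release_step by blast
    then have "sem I w i (Release a b)"
      using sem_Release_if_persistent[where P = "\<lambda>m. \<psi> \<in> V m"] less.prems by blast
    with Release show ?thesis by simp
  qed
qed

(* The last clause forbids postponing an Until whose goal already holds; without it a run
   could keep a satisfied Until alive forever on a non-accepting path. *)
definition eager_successor
  :: "('x \<Rightarrow> 'p set) \<Rightarrow> (nat \<Rightarrow> 'x) \<Rightarrow> nat \<Rightarrow> 'p ltl \<Rightarrow> 'p fconj \<Rightarrow> bool" where
  "eager_successor I w i q A \<longleftrightarrow> A \<in> pderiv I (w i) q \<and> (\<forall>\<chi>\<in>A. sem I w (Suc i) \<chi>)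
     \<and> (\<forall>a b. q = Until a b \<longrightarrow> sem I w i b \<longrightarrow> q \<notin> A)"

lemma eager_successor_exists:
  assumes "sem I w i q"
  shows "\<exists>A. eager_successor I w i q A"
proof (cases "\<exists>a b. q = Until a b \<and> sem I w i b")
  case True
  then obtain a b where q: "q = Until a b" and "sem I w i b" by blast
  then obtain \<nu> B where B: "(\<nu>, B) \<in> LF b" "models I (w i) \<nu>" "\<forall>\<chi>\<in>B. sem I w (Suc i) \<chi>"
    using LF_complete by blast
  moreover from B(1) have "Until a b \<notin> B" using size_LF_le by fastforce
  ultimately have "eager_successor I w i q B"
    unfolding eager_successor_def pderiv_def using q by auto
  then show ?thesis ..
next
  case False
  from LF_complete[OF assms] obtain \<mu> A
    where "(\<mu>, A) \<in> LF q" "models I (w i) \<mu>" "\<forall>\<chi>\<in>A. sem I w (Suc i) \<chi>"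
    by blast
  with False have "eager_successor I w i q A"
    unfolding eager_successor_def pderiv_def by blast
  then show ?thesis ..
qed

definition eager_succ
  :: "('x \<Rightarrow> 'p set) \<Rightarrow> (nat \<Rightarrow> 'x) \<Rightarrow> nat \<Rightarrow> 'p ltl \<Rightarrow> 'p fconj" where
  "eager_succ I w i q = (SOME A. eager_successor I w i q A)"

lemma eager_successor_eager_succ:
  "sem I w i q \<Longrightarrow> eager_successor I w i q (eager_succ I w i q)"
  unfolding eager_succ_def by (rule someI_ex) (rule eager_successor_exists)

fun canonical_levels
  :: "('x \<Rightarrow> 'p set) \<Rightarrow> (nat \<Rightarrow> 'x) \<Rightarrow> 'p ltl \<Rightarrow> nat \<Rightarrow> 'p ltl set" where
  "canonical_levels I w \<phi> 0 = (SOME A. A \<in> simp \<phi> \<and> (\<forall>\<chi>\<in>A. sem I w 0 \<chi>))"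
| "canonical_levels I w \<phi> (Suc n) = (\<Union>q\<in>canonical_levels I w \<phi> n. eager_succ I w n q)"

lemma canonical_levels_0:
  "sem I w 0 \<phi> \<Longrightarrow>
     canonical_levels I w \<phi> 0 \<in> simp \<phi> \<and> (\<forall>\<chi>\<in>canonical_levels I w \<phi> 0. sem I w 0 \<chi>)"
  unfolding canonical_levels.simps by (rule someI_ex) (meson sem_iff_simp)

lemma canonical_levels_sem:
  assumes "sem I w 0 \<phi>"
  shows "\<chi> \<in> canonical_levels I w \<phi> n \<Longrightarrow> sem I w n \<chi> \<and> \<chi> \<in> pderiv_plus \<phi>"
proof (induction n arbitrary: \<chi>)
  case 0
  then show ?case using canonical_levels_0[OF assms] simp_subset_pderiv_plus by blast
next
  case (Suc n)
  then obtain q where q: "q \<in> canonical_levels I w \<phi> n" "\<chi> \<in> eager_succ I w n q" by auto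
  with Suc.IH have "sem I w n q" "q \<in> pderiv_plus \<phi>" by blast+
  moreover from eager_successor_eager_succ[OF this(1)] obtain \<mu>
    where "(\<mu>, eager_succ I w n q) \<in> LF q" "\<forall>\<chi>\<in>eager_succ I w n q. sem I w (Suc n) \<chi>"
    unfolding eager_successor_def pderiv_def by blast
  ultimately show ?case
    using q(2) LF_subset_pderiv_plus pderiv_plus_trans by blast
qed

lemma canonical_run:
  assumes "sem I w 0 \<phi>"
  shows "is_run (ltl_aut I \<phi>) w (canonical_levels I w \<phi>) (eager_succ I w)"
proof -
  have "eager_succ I w i q \<in> pderiv I (w i) q" if "q \<in> canonical_levels I w \<phi> i" for i q
    using canonical_levels_sem[OF assms that] eager_successor_eager_succ
    unfolding eager_successor_def by blast
  then show ?thesis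
    using canonical_levels_0[OF assms] canonical_levels_sem[OF assms]
    unfolding is_run_def ltl_aut_def by auto
qed

lemma eventually_constant_if_descending:
  fixes f :: "'a \<Rightarrow> nat"
  assumes "\<And>i. f (p (Suc i)) < f (p i) \<or> p (Suc i) = p i"
  obtains N where "\<And>n. N \<le> n \<Longrightarrow> p n = p N"
proof -
  obtain N where least: "\<And>i. f (p N) \<le> f (p i)"
    using ex_has_least_nat[of "\<lambda>_. True" 0 "f \<circ> p"] by auto
  have "p n = p N" if "N \<le> n" for n
    using that
  proof (induction n rule: dec_induct)
    case (step n)
    with assms[of n] least[of "Suc n"] show ?case by auto
  qed simp
  then show ?thesis by (rule that)
qed

lemma canonical_run_accepting:
  assumes "sem I w 0 \<phi>"
  shows "buechi_accepting (ltl_aut I \<phi>) (canonical_levels I w \<phi>) (eager_succ I w)"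
  unfolding buechi_accepting_def
proof (intro allI impI)
  fix p
  assume path: "is_path (canonical_levels I w \<phi>) (eager_succ I w) p"
  then have p_succ: "p (Suc i) \<in> eager_succ I w i (p i)" for i
    by (simp add: is_path_def)
  have p_level: "p i \<in> canonical_levels I w \<phi> i" for i
    using is_path_in_run[OF canonical_run[OF assms] path] .
  have p_sem: "sem I w i (p i)" and p_states: "p i \<in> pderiv_plus \<phi>" for i
    using canonical_levels_sem[OF assms p_level] by blast+
  have eager: "eager_successor I w i (p i) (eager_succ I w i (p i))" for i
    using eager_successor_eager_succ[OF p_sem] .
  have p_LF: "\<exists>\<mu>. (\<mu>, eager_succ I w i (p i)) \<in> LF (p i)" for i
    using eager unfolding eager_successor_def pderiv_def by blast
  have "size (p (Suc i)) < size (p i) \<or> p (Suc i) = p i" for i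
    using p_LF[of i] size_LF p_succ by blast
  then obtain N where stable: "\<And>n. N \<le> n \<Longrightarrow> p n = p N"
    using eventually_constant_if_descending by blast
  have "p N \<in> eager_succ I w N (p N)"
    using p_succ[of N] stable[of "Suc N"] by simp
  then obtain a b where ab: "p N = Until a b \<or> p N = Release a b"
    using p_LF[of N] size_LF by blast
  have "p N \<noteq> Until a b"
  proof
    assume until: "p N = Until a b"
    with p_sem[of N] obtain j where "N \<le> j" "sem I w j b" by auto
    with until stable[of j] stable[of "Suc j"] p_succ[of j] eager[of j] show False
      unfolding eager_successor_def by simp
  qed
  with ab p_states[of N] have "p N \<in> acc (ltl_aut I \<phi>)"
    by (auto simp: ltl_aut_def is_release_def)
  with stable show "\<exists>\<^sub>\<infinity>i. p i \<in> acc (ltl_aut I \<phi>)"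
    unfolding INFM_nat_le by (metis nle_le)
qed

theorem theorem3:
  fixes I :: "'x \<Rightarrow> 'p set" and \<phi> :: "'p ltl"
  shows "ltl_lang I \<phi> = aut_lang (ltl_aut I \<phi>)"
proof
  show "ltl_lang I \<phi> \<subseteq> aut_lang (ltl_aut I \<phi>)"
    unfolding ltl_lang_def aut_lang_def using canonical_run canonical_run_accepting by blast
  show "aut_lang (ltl_aut I \<phi>) \<subseteq> ltl_lang I \<phi>"
  proof
    fix w
    assume "w \<in> aut_lang (ltl_aut I \<phi>)"
    then obtain V E where run: "is_run (ltl_aut I \<phi>) w V E"
      and accepting: "buechi_accepting (ltl_aut I \<phi>) V E"
      unfolding aut_lang_def by blast
    have "V 0 \<in> simp \<phi>" using run by (simp add: is_run_def ltl_aut_def)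
    moreover have "\<forall>\<chi>\<in>V 0. sem I w 0 \<chi>" using accepting_run_sound[OF run accepting] by blast
    ultimately have "sem I w 0 \<phi>" using sem_iff_simp by blast
    then show "w \<in> ltl_lang I \<phi>" by (simp add: ltl_lang_def)
  qed
qed

end
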